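(* Let $S$ be a scheme on $X$ and $\mathbb F$ a field. If $S$ is triply regular, then $S$ has no bad pairs.
   Context: Let $X$ be a nonempty finite set. A scheme of class $d$ on $X$ is a partition $S=\{R_0,\dots,R_d\}$ of $X\times X$ into nonempty sets such that $R_0=\{(b,b):b\in X\}$; for each $c$ there is $c'$ with $R_{c'}=\{(f,e):(e,f)\in R_c\}$; and for all $i,j,k$ the intersection number $p_{ij}^k=|\{\ell\in X:(m,\ell)\in R_i,(\ell,n)\in R_j\}|$ does not depend on $(m,n)\in R_k$. The valency is $k_a=p_{aa'}^0$; complex product $R_aR_b=\{R_c:p_{ab}^c>0\}$. For $y\in X$, $yR_a=\{z:(y,z)\in R_a\}$; $A_a\in M_X(\mathbb F)$ is the $(0,1)$ adjacency matrix of $R_a$ and $E_a^*(y)$ is the diagonal $(0,1)$-matrix with ones exactly at positions indexed by $yR_a$. The products $E_i^*(y)A_jE_\ell^*(y)$ are the triple products at $y$. $S$ is triply regular if for every $y\in X$ the $\mathbb F$-linear span of all triple products $E_i^*(y)A_jE_\ell^*(y)$ ($R_i,R_j,R_\ell\in S$) is a unital $\mathbb F$-subalgebra of $M_X(\mathbb F)$. Bad pair: $(u,v)$ is a bad pair of $S$ if there exist an integer $a\ge1$ and $R_{i_b},R_{j_b},R_{\ell_b}\in S$ ($b=0,\dots,a$) with $i_0=u$, $\ell_a=v$, $k_{i_b}=k_{\ell_b}=2$ and $p_{i_bj_b}^{\ell_b}=1$ for all $b$, $\ell_c=i_{c+1}$ for $0\le c\le a-1$, and $|R_{u'}R_v|=1$.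 *)

theory Defs
  imports Main
begin

definition is_scheme :: "'a set \<Rightarrow> nat \<Rightarrow> (nat \<Rightarrow> ('a \<times> 'a) set) \<Rightarrow> bool" where
  "is_scheme X d R \<longleftrightarrow>
     finite X \<and> X \<noteq> {} \<and>
     (\<forall>c\<le>d. R c \<noteq> {} \<and> R c \<subseteq> X \<times> X) \<and>
     (\<forall>c\<le>d. \<forall>c'\<le>d. c \<noteq> c' \<longrightarrow> R c \<inter> R c' = {}) \<and>
     (\<Union>c\<in>{0..d}. R c) = X \<times> X \<and>
     R 0 = {(b, b) | b. b \<in> X} \<and>
     (\<forall>c\<le>d. \<exists>c'\<le>d. R c' = {(f, e). (e, f) \<in> R c}) \<and>
     (\<forall>i\<le>d. \<forall>j\<le>d. \<forall>k\<le>d. \<forall>m n m' n'. (m, n) \<in> R k \<longrightarrow> (m', n') \<in> R k \<longrightarrow>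
        card {l \<in> X. (m, l) \<in> R i \<and> (l, n) \<in> R j}
      = card {l \<in> X. (m', l) \<in> R i \<and> (l, n') \<in> R j})"

text \<open>Intersection number p_ij^k, evaluated at some pair of R k.\<close>
definition inum :: "'a set \<Rightarrow> (nat \<Rightarrow> ('a \<times> 'a) set) \<Rightarrow> nat \<Rightarrow> nat \<Rightarrow> nat \<Rightarrow> nat" where
  "inum X R i j k = (let (m, n) = (SOME mn. mn \<in> R k) in
      card {l \<in> X. (m, l) \<in> R i \<and> (l, n) \<in> R j})"

definition conv_idx :: "nat \<Rightarrow> (nat \<Rightarrow> ('a \<times> 'a) set) \<Rightarrow> nat \<Rightarrow> nat" where
  "conv_idx d R c = (THE c'. c' \<le> d \<and> R c' = {(f, e). (e, f) \<in> R c})"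

definition valency :: "'a set \<Rightarrow> nat \<Rightarrow> (nat \<Rightarrow> ('a \<times> 'a) set) \<Rightarrow> nat \<Rightarrow> nat" where
  "valency X d R a = inum X R a (conv_idx d R a) 0"

text \<open>Complex product R_a R_b, as a set of indices.\<close>
definition cplx_prod :: "'a set \<Rightarrow> nat \<Rightarrow> (nat \<Rightarrow> ('a \<times> 'a) set) \<Rightarrow> nat \<Rightarrow> nat \<Rightarrow> nat set" where
  "cplx_prod X d R a b = {c. c \<le> d \<and> inum X R a b c > 0}"

text \<open>Matrices in M_X(F) as functions X \<times> X \<rightarrow> F (zero outside X).\<close>
definition mat_mult :: "'a set \<Rightarrow> ('a \<Rightarrow> 'a \<Rightarrow> 'f::field) \<Rightarrow> ('a \<Rightarrow> 'a \<Rightarrow> 'f) \<Rightarrow> ('a \<Rightarrow> 'a \<Rightarrow> 'f)" where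
  "mat_mult X A B = (\<lambda>x z. \<Sum>w\<in>X. A x w * B w z)"

definition mat_one :: "'a set \<Rightarrow> ('a \<Rightarrow> 'a \<Rightarrow> 'f::field)" where
  "mat_one X = (\<lambda>x z. if x = z \<and> x \<in> X then 1 else 0)"

definition adj_mat :: "'f itself \<Rightarrow> ('a \<times> 'a) set \<Rightarrow> ('a \<Rightarrow> 'a \<Rightarrow> 'f::field)" where
  "adj_mat _ Rel = (\<lambda>x z. if (x, z) \<in> Rel then 1 else 0)"

text \<open>Dual idempotent E_a^*(y): diagonal with ones at yR_a.\<close>
definition dual_idem :: "'f itself \<Rightarrow> 'a \<Rightarrow> ('a \<times> 'a) set \<Rightarrow> ('a \<Rightarrow> 'a \<Rightarrow> 'f::field)" where
  "dual_idem _ y Rel = (\<lambda>x z. if x = z \<and> (y, x) \<in> Rel then 1 else 0)"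

definition triple_prod :: "'f itself \<Rightarrow> 'a set \<Rightarrow> (nat \<Rightarrow> ('a \<times> 'a) set) \<Rightarrow> 'a \<Rightarrow> nat \<Rightarrow> nat \<Rightarrow> nat
     \<Rightarrow> ('a \<Rightarrow> 'a \<Rightarrow> 'f::field)" where
  "triple_prod F X R y i j l =
     mat_mult X (mat_mult X (dual_idem F y (R i)) (adj_mat F (R j))) (dual_idem F y (R l))"

text \<open>F-linear span of the triple products at y (finitely many, so all linear combinations).\<close>
definition triple_span :: "'f itself \<Rightarrow> 'a set \<Rightarrow> nat \<Rightarrow> (nat \<Rightarrow> ('a \<times> 'a) set) \<Rightarrow> 'a
     \<Rightarrow> ('a \<Rightarrow> 'a \<Rightarrow> 'f::field) set" where
  "triple_span F X d R y =
     {M. \<exists>c :: nat \<times> nat \<times> nat \<Rightarrow> 'f.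
        M = (\<lambda>x z. \<Sum>(i, j, l)\<in>{0..d} \<times> {0..d} \<times> {0..d}. c (i, j, l) * triple_prod F X R y i j l x z)}"

text \<open>The span is always an F-subspace; it is a unital subalgebra iff it contains the identity
  of M_X(F) and is closed under matrix multiplication.\<close>
definition triply_regular :: "'f::field itself \<Rightarrow> 'a set \<Rightarrow> nat \<Rightarrow> (nat \<Rightarrow> ('a \<times> 'a) set) \<Rightarrow> bool" where
  "triply_regular F X d R \<longleftrightarrow>
     (\<forall>y\<in>X. mat_one X \<in> triple_span F X d R y \<and>
        (\<forall>A\<in>triple_span F X d R y. \<forall>B\<in>triple_span F X d R y. mat_mult X A B \<in> triple_span F X d R y))"

definition bad_pair :: "'a set \<Rightarrow> nat \<Rightarrow> (nat \<Rightarrow> ('a \<times> 'a) set) \<Rightarrow> nat \<Rightarrow> nat \<Rightarrow> bool" where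
  "bad_pair X d R u v \<longleftrightarrow>
     (\<exists>a::nat. \<exists>i j l :: nat \<Rightarrow> nat. a \<ge> 1 \<and>
        (\<forall>b\<le>a. i b \<le> d \<and> j b \<le> d \<and> l b \<le> d) \<and>
        i 0 = u \<and> l a = v \<and>
        (\<forall>b\<le>a. valency X d R (i b) = 2 \<and> valency X d R (l b) = 2 \<and> inum X R (i b) (j b) (l b) = 1) \<and>
        (\<forall>c<a. l c = i (c + 1)) \<and>
        card (cplx_prod X d R (conv_idx d R u) v) = 1)"

end

theory Submission
  imports Defs
begin

text \<open>Fix \<open>(y, z) \<in> R v\<close>. Since all intersection numbers along the chain are 1, the
  \<open>z\<close>-column of the product of the triple products \<open>E\<^sup>*(i b) A(j b) E\<^sup>*(l b)\<close>, \<open>b = 0..a\<close>,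
  is the unit vector of a single point \<open>w \<in> yR u\<close>. Triple regularity puts this product into
  the span of the triple products at \<open>y\<close>, and the \<open>(x, z)\<close>-entry of any element of that span
  depends only on the relations containing \<open>(y, x)\<close>, \<open>(x, z)\<close> and \<open>(y, z)\<close>. As
  \<open>|R u' R v| = 1\<close>, all points of \<open>yR u\<close> are in the same relation to \<open>z\<close>, so the column is
  constant on \<open>yR u\<close>; but \<open>k u = 2\<close> gives a second point there.\<close>

lemma mat_mult_dual_idem_left:
  assumes "finite X"
  shows "mat_mult X (dual_idem F y Rel) A x z = (if x \<in> X \<and> (y, x) \<in> Rel then A x z else 0)"
proof -
  have "mat_mult X (dual_idem F y Rel) A x z =
      (\<Sum>t\<in>X. if t = x then (if (y, x) \<in> Rel then A x z else 0) else 0)"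
    unfolding mat_mult_def dual_idem_def by (rule sum.cong) auto
  then show ?thesis using assms by simp
qed

lemma mat_mult_dual_idem_right:
  assumes "finite X"
  shows "mat_mult X A (dual_idem F y Rel) x z = (if z \<in> X \<and> (y, z) \<in> Rel then A x z else 0)"
proof -
  have "mat_mult X A (dual_idem F y Rel) x z =
      (\<Sum>t\<in>X. if t = z then (if (y, z) \<in> Rel then A x z else 0) else 0)"
    unfolding mat_mult_def dual_idem_def by (rule sum.cong) auto
  then show ?thesis using assms by simp
qed

lemma mat_mult_unit_column:
  assumes "finite X" "x \<in> X" "\<And>t. B t z = (if t = x then 1 else 0)"
  shows "mat_mult X A B w z = A w x"
proof -
  have "mat_mult X A B w z = (\<Sum>t\<in>X. if t = x then A w x else 0)"
    unfolding mat_mult_def by (rule sum.cong) (simp_all add: assms(3))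
  then show ?thesis using assms(1,2) by simp
qed

fun chain_prod :: "'f itself \<Rightarrow> 'a set \<Rightarrow> (nat \<Rightarrow> ('a \<times> 'a) set) \<Rightarrow> 'a
    \<Rightarrow> (nat \<Rightarrow> nat) \<Rightarrow> (nat \<Rightarrow> nat) \<Rightarrow> (nat \<Rightarrow> nat) \<Rightarrow> nat \<Rightarrow> ('a \<Rightarrow> 'a \<Rightarrow> 'f::field)" where
  "chain_prod F X R y i j l 0 = triple_prod F X R y (i 0) (j 0) (l 0)"
| "chain_prod F X R y i j l (Suc b) =
    mat_mult X (chain_prod F X R y i j l b) (triple_prod F X R y (i (Suc b)) (j (Suc b)) (l (Suc b)))"

locale scheme =
  fixes X :: "'a set" and d :: nat and R :: "nat \<Rightarrow> ('a \<times> 'a) set"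
  assumes is_scheme: "is_scheme X d R"
begin

lemma finite_X: "finite X"
  using is_scheme by (simp add: is_scheme_def)

lemma rel_subset: "c \<le> d \<Longrightarrow> R c \<subseteq> X \<times> X"
  using is_scheme by (simp add: is_scheme_def)

lemma rel_nonempty: "c \<le> d \<Longrightarrow> R c \<noteq> {}"
  using is_scheme by (simp add: is_scheme_def)

lemma rel_disjoint: "c \<le> d \<Longrightarrow> c' \<le> d \<Longrightarrow> c \<noteq> c' \<Longrightarrow> R c \<inter> R c' = {}"
  using is_scheme by (simp add: is_scheme_def)

lemma mem_rel_iff:
  assumes "p \<le> d" "i \<le> d" "(x, z) \<in> R p"
  shows "(x, z) \<in> R i \<longleftrightarrow> i = p"
  using rel_disjoint[OF assms(1,2)] assms(3) by blast

lemma rel_exists: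
  assumes "x \<in> X" "z \<in> X"
  obtains r where "r \<le> d" "(x, z) \<in> R r"
proof -
  have "(x, z) \<in> (\<Union>c\<in>{0..d}. R c)"
    using is_scheme assms by (simp add: is_scheme_def)
  then show thesis using that by auto
qed

lemma diagonal_in_R0: "x \<in> X \<Longrightarrow> (x, x) \<in> R 0"
  using is_scheme by (simp add: is_scheme_def)

lemma card_paths_eq:
  assumes "i \<le> d" "j \<le> d" "k \<le> d" "(m, n) \<in> R k" "(m', n') \<in> R k"
  shows "card {t \<in> X. (m, t) \<in> R i \<and> (t, n) \<in> R j} = card {t \<in> X. (m', t) \<in> R i \<and> (t, n') \<in> R j}"
proof -
  have "\<forall>i\<le>d. \<forall>j\<le>d. \<forall>k\<le>d. \<forall>m n m' n'. (m, n) \<in> R k \<longrightarrow> (m', n') \<in> R k \<longrightarrow>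
      card {t \<in> X. (m, t) \<in> R i \<and> (t, n) \<in> R j} = card {t \<in> X. (m', t) \<in> R i \<and> (t, n') \<in> R j}"
    using is_scheme unfolding is_scheme_def by (elim conjE)
  from this[rule_format, OF assms] show ?thesis .
qed

lemma inum_eq_card:
  assumes "i \<le> d" "j \<le> d" "k \<le> d" "(m, n) \<in> R k"
  shows "inum X R i j k = card {t \<in> X. (m, t) \<in> R i \<and> (t, n) \<in> R j}"
proof -
  obtain m' n' where some: "(SOME p. p \<in> R k) = (m', n')"
    by (cases "SOME p. p \<in> R k")
  have "(m', n') \<in> R k"
    using someI[of "\<lambda>p. p \<in> R k", OF assms(4)] some by simp
  then show ?thesis
    unfolding inum_def some by (simp add: card_paths_eq[OF assms(1-3) _ assms(4)])
qed

lemma conv_idx_le_and_mem_iff: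
  assumes "c \<le> d"
  shows conv_idx_le: "conv_idx d R c \<le> d"
    and mem_conv_idx_iff: "(x, z) \<in> R (conv_idx d R c) \<longleftrightarrow> (z, x) \<in> R c"
proof -
  have "\<forall>c\<le>d. \<exists>c'\<le>d. R c' = {(f, e). (e, f) \<in> R c}"
    using is_scheme by (simp add: is_scheme_def)
  then obtain c' where c': "c' \<le> d" "R c' = {(f, e). (e, f) \<in> R c}"
    using assms by blast
  have "conv_idx d R c = c'"
    unfolding conv_idx_def
  proof (rule the_equality)
    show "c' \<le> d \<and> R c' = {(f, e). (e, f) \<in> R c}" using c' ..
  next
    fix c'' assume c'': "c'' \<le> d \<and> R c'' = {(f, e). (e, f) \<in> R c}"
    obtain p where p: "p \<in> R c'" using rel_nonempty[OF c'(1)] by blast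
    moreover have "p \<in> R c''" using p c'(2) c'' by simp
    ultimately show "c'' = c'" using rel_disjoint[of c'' c'] c'(1) c'' by auto
  qed
  with c' show "conv_idx d R c \<le> d" and "(x, z) \<in> R (conv_idx d R c) \<longleftrightarrow> (z, x) \<in> R c"
    by simp_all
qed

lemma valency_eq_card:
  assumes "c \<le> d" "y \<in> X"
  shows "valency X d R c = card {t \<in> X. (y, t) \<in> R c}"
  using inum_eq_card[OF assms(1) conv_idx_le[OF assms(1)] _ diagonal_in_R0[OF assms(2)]]
  by (simp add: valency_def mem_conv_idx_iff assms(1))

lemma exists_other_neighbour:
  assumes "c \<le> d" "2 \<le> valency X d R c" "(y, w) \<in> R c"
  obtains w' where "(y, w') \<in> R c" "w' \<noteq> w"
proof -
  have "y \<in> X" using rel_subset[OF assms(1)] assms(3) by auto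
  then have "2 \<le> card {t \<in> X. (y, t) \<in> R c}"
    using assms(2) valency_eq_card[OF assms(1)] by simp
  then have "\<not> {t \<in> X. (y, t) \<in> R c} \<subseteq> {w}"
    using card_mono[of "{w}" "{t \<in> X. (y, t) \<in> R c}"] by auto
  then show thesis using that by blast
qed

lemma cplx_prod_memI:
  assumes "a \<le> d" "b \<le> d" "c \<le> d" "(m, t) \<in> R a" "(t, n) \<in> R b" "(m, n) \<in> R c"
  shows "c \<in> cplx_prod X d R a b"
proof -
  have "t \<in> {s \<in> X. (m, s) \<in> R a \<and> (s, n) \<in> R b}"
    using rel_subset[OF assms(1)] assms(4,5) by auto
  then have "inum X R a b c > 0"
    using inum_eq_card[OF assms(1-3,6)] finite_X by (auto simp: card_gt_0_iff)
  then show ?thesis using assms(3) by (simp add: cplx_prod_def)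
qed

lemma singleton_cplx_prod_rel:
  assumes "u \<le> d" "v \<le> d" "r \<le> d" "card (cplx_prod X d R (conv_idx d R u) v) = 1"
    and "(y, z) \<in> R v" "(y, w) \<in> R u" "(y, w') \<in> R u" "(w, z) \<in> R r"
  shows "(w', z) \<in> R r"
proof -
  obtain q where q: "cplx_prod X d R (conv_idx d R u) v = {q}"
    using assms(4) by (auto simp: card_Suc_eq)
  have u': "conv_idx d R u \<le> d" using conv_idx_le[OF assms(1)] .
  have "w' \<in> X" "z \<in> X"
    using rel_subset assms(1,2,5,7) by blast+
  then obtain r' where r': "r' \<le> d" "(w', z) \<in> R r'"
    by (rule rel_exists)
  have "r \<in> cplx_prod X d R (conv_idx d R u) v" "r' \<in> cplx_prod X d R (conv_idx d R u) v"
    using cplx_prod_memI[OF u' assms(2)] assms r' mem_conv_idx_iff[OF assms(1)] by blast+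
  with q r' show ?thesis by simp
qed

lemma triple_prod_eq:
  assumes "i \<le> d" "l \<le> d"
  shows "triple_prod TYPE('f::field) X R y i j l x z =
    (if (y, x) \<in> R i \<and> (x, z) \<in> R j \<and> (y, z) \<in> R l then 1 else 0)"
  using rel_subset[OF assms(1)] rel_subset[OF assms(2)]
  by (auto simp: triple_prod_def mat_mult_dual_idem_left mat_mult_dual_idem_right finite_X adj_mat_def)

lemma triple_prod_in_span:
  assumes "i \<le> d" "j \<le> d" "l \<le> d"
  shows "triple_prod TYPE('f::field) X R y i j l \<in> triple_span TYPE('f) X d R y"
  unfolding triple_span_def
proof (intro CollectI exI ext)
  fix x z
  have "(\<Sum>(i', j', l')\<in>{0..d} \<times> {0..d} \<times> {0..d}.
       (if (i', j', l') = (i, j, l) then 1 else 0) * triple_prod TYPE('f) X R y i' j' l' x z) =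
    (\<Sum>p\<in>{0..d} \<times> {0..d} \<times> {0..d}. if p = (i, j, l) then triple_prod TYPE('f) X R y i j l x z else 0)"
    by (rule sum.cong) (auto split: if_splits)
  then show "triple_prod TYPE('f) X R y i j l x z =
    (\<Sum>(i', j', l')\<in>{0..d} \<times> {0..d} \<times> {0..d}.
       (if (i', j', l') = (i, j, l) then 1 else 0) * triple_prod TYPE('f) X R y i' j' l' x z)"
    using assms by simp
qed

lemma triple_span_entry_eq:
  assumes "M \<in> triple_span TYPE('f::field) X d R y"
    and "p \<le> d" "q \<le> d" "s \<le> d"
    and "(y, x) \<in> R p" "(x, z) \<in> R q" "(y, z) \<in> R s"
    and "(y, x') \<in> R p" "(x', z') \<in> R q" "(y, z') \<in> R s"
  shows "M x z = M x' z'"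
proof -
  obtain c :: "nat \<times> nat \<times> nat \<Rightarrow> 'f" where M: "M = (\<lambda>x z.
      \<Sum>(i, j, l)\<in>{0..d} \<times> {0..d} \<times> {0..d}. c (i, j, l) * triple_prod TYPE('f) X R y i j l x z)"
    using assms(1) unfolding triple_span_def by blast
  have "triple_prod TYPE('f) X R y i j l x z = triple_prod TYPE('f) X R y i j l x' z'"
    if "i \<le> d" "j \<le> d" "l \<le> d" for i j l
  proof -
    have "(y, x) \<in> R i \<longleftrightarrow> (y, x') \<in> R i" "(x, z) \<in> R j \<longleftrightarrow> (x', z') \<in> R j"
      "(y, z) \<in> R l \<longleftrightarrow> (y, z') \<in> R l"
      using mem_rel_iff that assms(2-) by meson+
    then show ?thesis using that by (simp add: triple_prod_eq)
  qed
  then show ?thesis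
    unfolding M by (intro sum.cong) auto
qed

lemma triple_prod_unit_column:
  assumes "i \<le> d" "j \<le> d" "l \<le> d" "inum X R i j l = 1" "(y, z) \<in> R l"
  obtains x where "(y, x) \<in> R i"
    "\<And>x'. triple_prod TYPE('f::field) X R y i j l x' z = (if x' = x then 1 else 0)"
proof -
  have "card {t \<in> X. (y, t) \<in> R i \<and> (t, z) \<in> R j} = 1"
    using inum_eq_card[OF assms(1-3,5)] assms(4) by simp
  then obtain x where x: "{t \<in> X. (y, t) \<in> R i \<and> (t, z) \<in> R j} = {x}"
    by (auto simp: card_Suc_eq)
  have mid: "(y, x') \<in> R i \<and> (x', z) \<in> R j \<longleftrightarrow> x' = x" for x'
    using x rel_subset[OF assms(1)] by blast
  show thesis
  proof (rule that)
    show "(y, x) \<in> R i" using mid by blast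
    show "triple_prod TYPE('f) X R y i j l x' z = (if x' = x then 1 else 0)" for x'
      using mid[of x'] assms(1,3,5) by (simp add: triple_prod_eq)
  qed
qed

lemma chain_prod_in_span:
  assumes "triply_regular TYPE('f::field) X d R" "y \<in> X"
    and "\<forall>b'\<le>b. i b' \<le> d \<and> j b' \<le> d \<and> l b' \<le> d"
  shows "chain_prod TYPE('f) X R y i j l b \<in> triple_span TYPE('f) X d R y"
  using assms(3)
proof (induction b)
  case 0
  then show ?case by (simp add: triple_prod_in_span)
next
  case (Suc b)
  then have "chain_prod TYPE('f) X R y i j l b \<in> triple_span TYPE('f) X d R y"
    and "triple_prod TYPE('f) X R y (i (Suc b)) (j (Suc b)) (l (Suc b)) \<in> triple_span TYPE('f) X d R y"
    by (simp_all add: triple_prod_in_span)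
  with assms(1,2) show ?case
    unfolding triply_regular_def by simp
qed

lemma chain_prod_unit_column:
  assumes "\<forall>b'\<le>b. i b' \<le> d \<and> j b' \<le> d \<and> l b' \<le> d \<and> inum X R (i b') (j b') (l b') = 1"
    and "\<forall>c<b. l c = i (Suc c)" and "(y, z) \<in> R (l b)"
  shows "\<exists>w. (y, w) \<in> R (i 0) \<and>
    (\<forall>w'. chain_prod TYPE('f::field) X R y i j l b w' z = (if w' = w then 1 else 0))"
  using assms
proof (induction b arbitrary: z)
  case 0
  then have "i 0 \<le> d" "j 0 \<le> d" "l 0 \<le> d" "inum X R (i 0) (j 0) (l 0) = 1" by auto
  then obtain x where "(y, x) \<in> R (i 0)"
    "\<And>x'. triple_prod TYPE('f) X R y (i 0) (j 0) (l 0) x' z = (if x' = x then 1 else 0)"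
    using triple_prod_unit_column[where 'f='f, OF _ _ _ _ "0.prems"(3)] by blast
  then show ?case by auto
next
  case (Suc b)
  then have "i (Suc b) \<le> d" "j (Suc b) \<le> d" "l (Suc b) \<le> d"
    "inum X R (i (Suc b)) (j (Suc b)) (l (Suc b)) = 1"
    by blast+
  then obtain x where x: "(y, x) \<in> R (i (Suc b))" and column:
    "\<And>x'. triple_prod TYPE('f) X R y (i (Suc b)) (j (Suc b)) (l (Suc b)) x' z = (if x' = x then 1 else 0)"
    using triple_prod_unit_column[where 'f='f, OF _ _ _ _ Suc.prems(3)] by blast
  have "x \<in> X" using x Suc.prems(1) rel_subset by blast
  have "(y, x) \<in> R (l b)" using x Suc.prems(2) by simp
  moreover have "\<forall>b'\<le>b. i b' \<le> d \<and> j b' \<le> d \<and> l b' \<le> d \<and> inum X R (i b') (j b') (l b') = 1"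
    and "\<forall>c<b. l c = i (Suc c)"
    using Suc.prems(1,2) le_SucI less_SucI by blast+
  ultimately obtain w where "(y, w) \<in> R (i 0)"
    "\<forall>w'. chain_prod TYPE('f) X R y i j l b w' x = (if w' = w then 1 else 0)"
    using Suc.IH by blast
  with mat_mult_unit_column[where B = "triple_prod TYPE('f) X R y (i (Suc b)) (j (Suc b)) (l (Suc b))",
    OF finite_X \<open>x \<in> X\<close> column] show ?case by auto
qed

lemma triple_span_column_not_unit:
  assumes "M \<in> triple_span TYPE('f::field) X d R y"
    and "u \<le> d" "v \<le> d" "2 \<le> valency X d R u" "card (cplx_prod X d R (conv_idx d R u) v) = 1"
    and "(y, z) \<in> R v" "(y, w) \<in> R u"
  shows "\<not> (\<forall>w'. M w' z = (if w' = w then 1 else 0))"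
proof
  assume column: "\<forall>w'. M w' z = (if w' = w then 1 else 0)"
  obtain w' where w': "(y, w') \<in> R u" "w' \<noteq> w"
    using exists_other_neighbour[OF assms(2,4,7)] .
  have "w \<in> X" "z \<in> X" using assms(2,3,6,7) rel_subset by blast+
  then obtain r where r: "r \<le> d" "(w, z) \<in> R r" by (rule rel_exists)
  then have "(w', z) \<in> R r"
    using singleton_cplx_prod_rel[OF assms(2,3) _ assms(5,6,7) w'(1)] by blast
  then have "M w z = M w' z"
    using triple_span_entry_eq[OF assms(1,2) r(1) assms(3,7) r(2) assms(6) w'(1)] assms(6) by blast
  with column w'(2) show False by simp
qed

end

theorem corollary4p11:
  fixes X :: "'a set" and d :: nat and R :: "nat \<Rightarrow> ('a \<times> 'a) set"
  assumes "is_scheme X d R"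
    and "triply_regular TYPE('f::field) X d R"
  shows "\<forall>u\<le>d. \<forall>v\<le>d. \<not> bad_pair X d R u v"
proof (intro allI impI notI)
  interpret scheme X d R by (rule scheme.intro) (rule assms(1))
  fix u v assume "u \<le> d" "v \<le> d" and "bad_pair X d R u v"
  then obtain a :: nat and i j l :: "nat \<Rightarrow> nat"
    where bounds: "\<forall>b\<le>a. i b \<le> d \<and> j b \<le> d \<and> l b \<le> d"
    and "i 0 = u" "l a = v"
    and valencies: "\<forall>b\<le>a. valency X d R (i b) = 2 \<and> valency X d R (l b) = 2 \<and> inum X R (i b) (j b) (l b) = 1"
    and links: "\<forall>c<a. l c = i (c + 1)"
    and single: "card (cplx_prod X d R (conv_idx d R u) v) = 1"
    unfolding bad_pair_def by blast
  have chain: "\<forall>b\<le>a. i b \<le> d \<and> j b \<le> d \<and> l b \<le> d \<and> inum X R (i b) (j b) (l b) = 1"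
    using bounds valencies by blast
  have "2 \<le> valency X d R u" using valencies \<open>i 0 = u\<close> by auto
  obtain y z where yz: "(y, z) \<in> R v" using rel_nonempty[OF \<open>v \<le> d\<close>] by auto
  then have "y \<in> X" using rel_subset[OF \<open>v \<le> d\<close>] by blast
  obtain w where w: "(y, w) \<in> R u"
    and "\<forall>w'. chain_prod TYPE('f) X R y i j l a w' z = (if w' = w then 1 else 0)"
    using chain_prod_unit_column[where 'f='f, OF chain _, of y z] links yz \<open>i 0 = u\<close> \<open>l a = v\<close>
    by auto
  moreover have "\<not> (\<forall>w'. chain_prod TYPE('f) X R y i j l a w' z = (if w' = w then 1 else 0))"
    by (rule triple_span_column_not_unit[OF chain_prod_in_span[OF assms(2) \<open>y \<in> X\<close> bounds]
          \<open>u \<le> d\<close> \<open>v \<le> d\<close> \<open>2 \<le> valency X d R u\<close> single yz w])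
  ultimately show False by blast
qed

end
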